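(* Let $c>0$ and let $K=K(L)$ be positive integers with $K/L\to c$ as $L\to\infty$. With $$s^*(K,L)=\frac{L\,(K-1)^{L}}{K^{L+1}-(K-1)^{L-1}\big((K-1)K+L\big)},$$ $$\Pi_P=(1-s^* )\Big(1-\big(1-\tfrac{1}{K}\big)^L\Big),\qquad \Pi_R=s^*\,\frac{K}{L}\Big(1-\big(1-\tfrac{1}{K}\big)^L\Big),$$ one has, as $L\to\infty$, $$s^*\to\frac{1}{c\,(e^{1/c}-1)},\qquad \Pi_P\to 1-\frac{c+1}{c\,e^{1/c}},\qquad \Pi_R\to e^{-1/c}.$$
   Context: Here $s^*(K,L)$ is the common offer of the $K$ proposers in the subgame-perfect Nash equilibrium of the Multi-Proposer-Multi-Responder Ultimatum Game with $K$ proposers and $L$ responders (responders playing the evolutionarily stable strategy, which selects each proposer with probability $1/K$), and $\Pi_P,\Pi_R$ are the resulting expected payoffs of a proposer and of a responder. *)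

theory Defs
  imports "HOL-Analysis.Analysis"
begin

text \<open>Equilibrium offer s*(K,L) in the Multi-Proposer-Multi-Responder Ultimatum Game.\<close>
definition s_star :: "nat \<Rightarrow> nat \<Rightarrow> real" where
  "s_star K L = (real L * (real K - 1) ^ L) /
     (real K ^ (L + 1) - (real K - 1) ^ (L - 1) * ((real K - 1) * real K + real L))"

definition Pi_P :: "nat \<Rightarrow> nat \<Rightarrow> real" where
  "Pi_P K L = (1 - s_star K L) * (1 - (1 - 1 / real K) ^ L)"

definition Pi_R :: "nat \<Rightarrow> nat \<Rightarrow> real" where
  "Pi_R K L = s_star K L * (real K / real L) * (1 - (1 - 1 / real K) ^ L)"

end

theory Submission
  imports Defs
begin

text \<open>
  Dividing numerator and denominator of s* by K^(L+1) writes it in terms of L/K, L/(K(K-1)) and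
  (1 - 1/K)^L = ((1 - 1/K)^K) powr (L/K). As K tends to infinity with L/K tending to a = 1/c, these
  tend to a, 0 and e^(-a), so s* tends to a e^(-a)/(1 - e^(-a)) = a/(e^a - 1); the payoffs follow.
\<close>

lemma s_star_eq:
  assumes "k \<ge> 2" and "n \<ge> 1"
  shows "s_star k n = (real n / real k * (1 - 1 / real k) ^ n) /
     (1 - (1 - 1 / real k) ^ n * (1 + real n / ((real k - 1) * real k)))"
proof -
  define a where "a = real k"
  have a: "a \<ge> 2" using assms(1) by (simp add: a_def)
  obtain m where n: "n = Suc m" using assms(2) by (cases n) auto
  have q: "(1 - 1 / a) ^ n = (a - 1) ^ n / a ^ n"
  proof -
    have "1 - 1 / a = (a - 1) / a" using a by (simp add: field_simps)
    then show ?thesis by (simp add: power_divide)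
  qed
  have num: "real n * (a - 1) ^ n = (real n / a * (1 - 1 / a) ^ n) * a ^ (n + 1)"
    using a by (simp add: q field_simps)
  have den: "a ^ (n + 1) - (a - 1) ^ (n - 1) * ((a - 1) * a + real n)
      = (1 - (1 - 1 / a) ^ n * (1 + real n / ((a - 1) * a))) * a ^ (n + 1)"
    using a by (simp add: q n field_simps)
  show ?thesis
    using a unfolding s_star_def a_def[symmetric] num den by simp
qed

lemma tendsto_one_minus_inverse_power:
  fixes K N :: "'a \<Rightarrow> nat"
  assumes K: "filterlim K at_top F"
    and ratio: "((\<lambda>x. real (N x) / real (K x)) \<longlongrightarrow> a) F"
  shows "((\<lambda>x. (1 - 1 / real (K x)) ^ N x) \<longlongrightarrow> exp (- a)) F"
proof -
  have K2: "eventually (\<lambda>x. K x \<ge> 2) F"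
    using K by (simp add: filterlim_at_top)
  have "((\<lambda>x. (1 - 1 / real (K x)) ^ K x) \<longlongrightarrow> exp (- 1)) F"
    using filterlim_compose[OF tendsto_exp_limit_sequentially[of "- 1"] K] by (simp add: o_def)
  then have "((\<lambda>x. ((1 - 1 / real (K x)) ^ K x) powr (real (N x) / real (K x)))
      \<longlongrightarrow> exp (- 1) powr a) F"
    using ratio by (rule tendsto_powr) simp
  moreover have "eventually (\<lambda>x. ((1 - 1 / real (K x)) ^ K x) powr (real (N x) / real (K x))
      = (1 - 1 / real (K x)) ^ N x) F"
    using K2
  proof eventually_elim
    case (elim x)
    then have "1 - 1 / real (K x) > 0" by (simp add: field_simps)
    with elim show ?case by (simp add: powr_realpow[symmetric] powr_powr)
  qed
  ultimately show ?thesis by (simp add: tendsto_cong powr_def)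
qed

lemma tendsto_s_star:
  fixes K N :: "'a \<Rightarrow> nat"
  assumes K: "filterlim K at_top F"
    and ratio: "((\<lambda>x. real (N x) / real (K x)) \<longlongrightarrow> a) F" and "a > 0"
  shows "((\<lambda>x. s_star (K x) (N x)) \<longlongrightarrow> a / (exp a - 1)) F"
proof -
  have q: "((\<lambda>x. (1 - 1 / real (K x)) ^ N x) \<longlongrightarrow> exp (- a)) F"
    using K ratio by (rule tendsto_one_minus_inverse_power)
  have "filterlim (\<lambda>x. real (K x)) at_top F"
    using K by (simp add: filterlim_sequentially_iff_filterlim_real)
  then have "filterlim (\<lambda>x. real (K x) - 1) at_top F"
    using filterlim_tendsto_add_at_top[OF tendsto_const, of _ _ "- 1"] by simp
  then have "((\<lambda>x. real (N x) / real (K x) * (1 / (real (K x) - 1))) \<longlongrightarrow> a * 0) F"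
    by (intro tendsto_mult ratio tendsto_divide_0[OF tendsto_const]
        filterlim_at_top_imp_at_infinity)
  then have small: "((\<lambda>x. real (N x) / ((real (K x) - 1) * real (K x))) \<longlongrightarrow> 0) F"
    by (simp add: field_simps)
  have "exp (- a) \<noteq> 1"
    using \<open>a > 0\<close> by simp
  then have "((\<lambda>x. (real (N x) / real (K x) * (1 - 1 / real (K x)) ^ N x) /
      (1 - (1 - 1 / real (K x)) ^ N x * (1 + real (N x) / ((real (K x) - 1) * real (K x)))))
      \<longlongrightarrow> (a * exp (- a)) / (1 - exp (- a) * (1 + 0))) F"
    by (intro tendsto_intros ratio q small) simp
  moreover have "eventually (\<lambda>x. K x \<ge> 2 \<and> N x \<ge> 1) F"
  proof -
    have "eventually (\<lambda>x. real (N x) / real (K x) > 0) F"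
      using ratio \<open>a > 0\<close> by (rule order_tendstoD)
    moreover have "eventually (\<lambda>x. K x \<ge> 2) F"
      using K by (simp add: filterlim_at_top)
    ultimately show ?thesis
      by eventually_elim (auto simp: zero_less_divide_iff)
  qed
  then have "eventually (\<lambda>x. (real (N x) / real (K x) * (1 - 1 / real (K x)) ^ N x) /
      (1 - (1 - 1 / real (K x)) ^ N x * (1 + real (N x) / ((real (K x) - 1) * real (K x))))
      = s_star (K x) (N x)) F"
    by eventually_elim (simp add: s_star_eq)
  ultimately have "((\<lambda>x. s_star (K x) (N x)) \<longlongrightarrow> (a * exp (- a)) / (1 - exp (- a) * (1 + 0))) F"
    by (rule Lim_transform_eventually)
  moreover have "(a * exp (- a)) / (1 - exp (- a) * (1 + 0)) = a / (exp a - 1)"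
    using \<open>a > 0\<close> by (simp add: exp_minus field_simps)
  ultimately show ?thesis by simp
qed

lemma tendsto_Pi_P:
  fixes K N :: "'a \<Rightarrow> nat"
  assumes "filterlim K at_top F"
    and "((\<lambda>x. real (N x) / real (K x)) \<longlongrightarrow> a) F" and "a > 0"
  shows "((\<lambda>x. Pi_P (K x) (N x)) \<longlongrightarrow> (1 - a / (exp a - 1)) * (1 - exp (- a))) F"
  unfolding Pi_P_def
  by (intro tendsto_intros tendsto_s_star tendsto_one_minus_inverse_power assms)

lemma tendsto_Pi_R:
  fixes K N :: "'a \<Rightarrow> nat"
  assumes "filterlim K at_top F"
    and ratio: "((\<lambda>x. real (N x) / real (K x)) \<longlongrightarrow> a) F" and "a > 0"
  shows "((\<lambda>x. Pi_R (K x) (N x)) \<longlongrightarrow> exp (- a)) F"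
proof -
  have "((\<lambda>x. real (K x) / real (N x)) \<longlongrightarrow> inverse a) F"
    using tendsto_inverse[OF ratio] \<open>a > 0\<close> by simp
  then have "((\<lambda>x. Pi_R (K x) (N x)) \<longlongrightarrow> a / (exp a - 1) * inverse a * (1 - exp (- a))) F"
    unfolding Pi_R_def
    by (intro tendsto_intros tendsto_s_star tendsto_one_minus_inverse_power assms)
  moreover have "a / (exp a - 1) * inverse a * (1 - exp (- a)) = exp (- a)"
    using \<open>a > 0\<close> by (simp add: exp_minus field_simps)
  ultimately show ?thesis by simp
qed

theorem mainTheorem5:
  fixes c :: real and K :: "nat \<Rightarrow> nat"
  assumes "c > 0"
    and "\<And>L. K L > 0"
    and "((\<lambda>L. real (K L) / real L) \<longlongrightarrow> c) at_top"
  shows "((\<lambda>L. s_star (K L) L) \<longlongrightarrow> 1 / (c * (exp (1 / c) - 1))) at_top \<and>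
         ((\<lambda>L. Pi_P (K L) L) \<longlongrightarrow> 1 - (c + 1) / (c * exp (1 / c))) at_top \<and>
         ((\<lambda>L. Pi_R (K L) L) \<longlongrightarrow> exp (- 1 / c)) at_top"
proof -
  note c = assms(1) and lim = assms(3)
  have "filterlim (\<lambda>L. real (K L) / real L * real L) at_top at_top"
    using lim c filterlim_real_sequentially by (rule filterlim_tendsto_pos_mult_at_top)
  moreover have "eventually (\<lambda>L. real (K L) / real L * real L = real (K L)) at_top"
    using eventually_gt_at_top[of 0] by eventually_elim simp
  ultimately have K: "filterlim K at_top at_top"
    unfolding filterlim_sequentially_iff_filterlim_real using filterlim_cong by fastforce
  have ratio: "((\<lambda>L. real L / real (K L)) \<longlongrightarrow> 1 / c) at_top"
    using tendsto_inverse[OF lim] c by (simp add: inverse_eq_divide)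
  have exp_gt_1: "exp (1 / c) > 1"
    using c by simp
  have "(1 - (1 / c) / (exp (1 / c) - 1)) * (1 - exp (- (1 / c))) = 1 - (c + 1) / (c * exp (1 / c))"
    using c exp_gt_1 by (simp add: exp_minus field_simps)
  then show ?thesis
    using tendsto_s_star[OF K ratio] tendsto_Pi_P[OF K ratio] tendsto_Pi_R[OF K ratio] c
    by simp
qed

end
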